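(* Let $B$ be a Boolean algebra, $d\ge 1$ an integer, and let $a_0,\dots,a_{d+1},b_1,\dots,b_{d+1}\in B$ satisfy $a_0=1$, $a_1\ge a_2\ge\dots\ge a_{d+1}=0$, $b_1\ge b_2\ge\dots\ge b_{d+1}=0$, and $a_i\le b_i$ for all $i$. Then the system in the unknowns $x_1,\dots,x_d\in B$ $$x_1\ge x_2\ge\dots\ge x_d,\qquad \bigvee_{i=0}^{n}(a_{n-i}\wedge x_i)=b_n\quad(n=1,\dots,d+1),$$ where $x_0=1$ and $x_{d+1}=0$ are constants, has at most one solution $(x_1,\dots,x_d)\in B^d$.
   Context: $\ge$ is the lattice order of the Boolean algebra $B$. *)

theory Defs
  imports Main
begin

definition is_solution :: "nat \<Rightarrow> (nat \<Rightarrow> 'a::boolean_algebra) \<Rightarrow> (nat \<Rightarrow> 'a) \<Rightarrow> (nat \<Rightarrow> 'a) \<Rightarrow> bool" where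
  "is_solution d a b x \<longleftrightarrow>
     x 0 = top \<and> x (Suc d) = bot \<and>
     (\<forall>i. 1 \<le> i \<and> i < d \<longrightarrow> x (Suc i) \<le> x i) \<and>
     (\<forall>n. 1 \<le> n \<and> n \<le> Suc d \<longrightarrow>
        Sup_fin ((\<lambda>i. inf (a (n - i)) (x i)) ` {0..n}) = b n)"

end

theory Submission
  imports Defs
begin

text \<open>
  Let x and y be two solutions and fix 1 \<le> k \<le> d.  The element
  z = x k \<sqinter> - y k is disjoint from every a j; this is shown by downward
  induction on j, starting from a (d+1) = bot.  If k + j \<le> d + 1, then
  z \<sqinter> a j lies below the joinand a j \<sqinter> x k of equation n = k + j for x,
  hence below b n, which is also the join of the terms a (n - i) \<sqinter> y i;
  those with i \<ge> k lie below y k and those with i < k lie below a (j+1),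
  so all are disjoint from z \<sqinter> a j, which forces z \<sqinter> a j = bot.  If
  k + j > d + 1, then a j \<sqinter> x k lies below a joinand of equation d + 1,
  i.e. below b (d+1) = bot.  For j = 0 we get z = z \<sqinter> a 0 = bot, i.e.
  x k \<le> y k, and by symmetry x k = y k.
\<close>

lemma disjoint_below_Sup_fin_eq_bot:
  fixes w :: "'a::boolean_algebra"
  assumes "finite S" "S \<noteq> {}" "w \<le> Sup_fin S" "\<And>s. s \<in> S \<Longrightarrow> inf w s = bot"
  shows "w = bot"
proof -
  have "w = inf w (Sup_fin S)" using assms(3) by (simp add: inf_absorb1)
  also have "\<dots> = Sup_fin {inf w s |s. s \<in> S}" by (rule inf_Sup1_distrib[OF assms(1,2)])
  also have "{inf w s |s. s \<in> S} = {bot}" using assms(2,4) by force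
  finally show ?thesis by simp
qed

lemma antimono_on_interval_if_Suc_le:
  fixes f :: "nat \<Rightarrow> 'a::order"
  assumes step: "\<And>i. lo \<le> i \<Longrightarrow> i < hi \<Longrightarrow> f (Suc i) \<le> f i"
  shows "antimono_on {lo..hi} f"
proof (rule monotone_onI)
  fix i j assume "i \<in> {lo..hi}" "j \<in> {lo..hi}" "i \<le> j"
  from \<open>i \<le> j\<close> \<open>j \<in> {lo..hi}\<close> show "f j \<le> f i"
  proof (induction j rule: dec_induct)
    case (step n)
    have "lo \<le> n" "n < hi" using \<open>i \<in> {lo..hi}\<close> step.hyps step.prems by auto
    then have "f (Suc n) \<le> f n" by (rule assms)
    also have "f n \<le> f i" using step.IH \<open>lo \<le> n\<close> \<open>n < hi\<close> by simp
    finally show ?case .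
  qed simp
qed

lemma is_solution_antimono:
  assumes "is_solution d a b u"
  shows "antimono_on {0..Suc d} u"
proof (rule antimono_on_interval_if_Suc_le)
  fix i assume "0 \<le> i" "i < Suc d"
  then consider "i = 0" | "i = d" | "1 \<le> i" "i < d" by linarith
  then show "u (Suc i) \<le> u i"
    using assms unfolding is_solution_def by cases auto
qed

text \<open>Main case of the induction step: if w lies below the right-hand side
  Sup_fin {a (k + j - i) \<sqinter> y i | i = 0..k+j} of equation k + j and is
  disjoint from y k and from a (j+1), then w = bot, because every joinand
  with i \<ge> k lies below y k and every other one below a (j+1).\<close>
lemma disjoint_from_equation_eq_bot:
  fixes w :: "'a::boolean_algebra" and a y :: "nat \<Rightarrow> 'a"
  assumes below_rhs: "w \<le> Sup_fin ((\<lambda>i. inf (a (k + j - i)) (y i)) ` {0..k + j})"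
    and disj_y: "inf w (y k) = bot"
    and disj_a: "inf w (a (Suc j)) = bot"
    and y_anti: "antimono_on {k..k + j} y"
    and a_anti: "antimono_on {Suc j..k + j} a"
  shows "w = bot"
proof (rule disjoint_below_Sup_fin_eq_bot[OF _ _ below_rhs])
  fix s assume "s \<in> (\<lambda>i. inf (a (k + j - i)) (y i)) ` {0..k + j}"
  then obtain i where i: "i \<le> k + j" and s: "s = inf (a (k + j - i)) (y i)" by auto
  show "inf w s = bot"
  proof (cases "k \<le> i")
    case True
    then have "y i \<le> y k" using monotone_onD[OF y_anti, of k i] i by auto
    then have "s \<le> y k" unfolding s by (rule le_infI2)
    then have "inf w s \<le> inf w (y k)" by (rule inf_mono[OF order_refl])
    then show ?thesis using disj_y by (simp add: le_bot)
  next
    case False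
    then have "a (k + j - i) \<le> a (Suc j)"
      using monotone_onD[OF a_anti, of "Suc j" "k + j - i"] by auto
    then have "s \<le> a (Suc j)" unfolding s by (rule le_infI1)
    then have "inf w s \<le> inf w (a (Suc j))" by (rule inf_mono[OF order_refl])
    then show ?thesis using disj_a by (simp add: le_bot)
  qed
qed auto

lemma solution_difference_disjoint:
  fixes a b x y :: "nat \<Rightarrow> 'a::boolean_algebra"
  assumes x_anti: "antimono_on {0..Suc d} x" and y_anti: "antimono_on {0..Suc d} y"
    and a_anti: "antimono_on {1..Suc d} a"
    and a_last: "a (Suc d) = bot" and b_last: "b (Suc d) = bot"
    and x_eq: "\<And>n. 1 \<le> n \<Longrightarrow> n \<le> Suc d \<Longrightarrow> Sup_fin ((\<lambda>i. inf (a (n - i)) (x i)) ` {0..n}) = b n"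
    and y_eq: "\<And>n. 1 \<le> n \<Longrightarrow> n \<le> Suc d \<Longrightarrow> Sup_fin ((\<lambda>i. inf (a (n - i)) (y i)) ` {0..n}) = b n"
    and k: "1 \<le> k" "k \<le> Suc d"
    and j: "j \<le> Suc d"
  shows "inf (inf (x k) (- y k)) (a j) = bot"
  using j
proof (induction j rule: inc_induct)
  case base
  show ?case by (simp add: a_last)
next
  case (step j)
  define z where "z = inf (x k) (- y k)"
  define w where "w = inf z (a j)"
  have x_term_le: "inf (a (n - i)) (x i) \<le> b n" if "1 \<le> n" "n \<le> Suc d" "i \<le> n" for n i
    using Sup_fin.coboundedI[of "(\<lambda>i. inf (a (n - i)) (x i)) ` {0..n}"] x_eq[OF that(1,2)] that(3)
    by auto
  have w_le_z: "w \<le> z" unfolding w_def by (rule inf.cobounded1)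
  have w_le: "w \<le> inf (a j) (x k)" unfolding w_def z_def by (simp add: le_infI1)
  have "w = bot"
  proof (cases "k + j \<le> Suc d")
    case True
    have n: "1 \<le> k + j" "k + j \<le> Suc d" "k \<le> k + j" using True k by linarith+
    have "inf (a (k + j - k)) (x k) \<le> b (k + j)" using x_term_le[OF n] .
    then have "inf (a j) (x k) \<le> b (k + j)" by (simp only: add_diff_cancel_left')
    with w_le have "w \<le> b (k + j)" by (rule order_trans)
    then have "w \<le> Sup_fin ((\<lambda>i. inf (a (k + j - i)) (y i)) ` {0..k + j})"
      by (simp only: y_eq[OF n(1,2)])
    moreover have "inf w (y k) = bot"
      using w_le_z unfolding z_def by (simp add: inf_shunt le_infI2)
    moreover have "inf w (a (Suc j)) = bot"
    proof -
      have "inf w (a (Suc j)) \<le> inf z (a (Suc j))" using w_le_z by (rule inf_mono) simp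
      with step.IH show ?thesis unfolding z_def by (simp add: le_bot)
    qed
    moreover have "antimono_on {k..k + j} y"
      using True by (intro monotone_on_subset[OF y_anti]) auto
    moreover have "antimono_on {Suc j..k + j} a"
      using True by (intro monotone_on_subset[OF a_anti]) auto
    ultimately show "w = bot" by (rule disjoint_from_equation_eq_bot)
  next
    case False
    define i where "i = Suc d - j"
    have "x k \<le> x i" using monotone_onD[OF x_anti, of i k] False k i_def by auto
    moreover have "a j = a (Suc d - i)" using step.hyps i_def by simp
    ultimately have "inf (a j) (x k) \<le> inf (a (Suc d - i)) (x i)" by (simp add: le_infI2)
    also have "\<dots> \<le> b (Suc d)" by (rule x_term_le) (auto simp: i_def)
    finally have "inf (a j) (x k) \<le> b (Suc d)" .
    with w_le have "w \<le> b (Suc d)" by (rule order_trans)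
    then show "w = bot" unfolding b_last by (rule le_bot)
  qed
  then show ?case unfolding w_def z_def .
qed

lemma solution_le_solution:
  fixes a b x y :: "nat \<Rightarrow> 'a::boolean_algebra"
  assumes "is_solution d a b x" "is_solution d a b y"
    and a_first: "a 0 = top" and a_anti: "antimono_on {1..Suc d} a"
    and "a (Suc d) = bot" "b (Suc d) = bot"
    and k: "1 \<le> k" "k \<le> Suc d"
  shows "x k \<le> y k"
proof -
  have "inf (inf (x k) (- y k)) (a 0) = bot"
    using assms by (intro solution_difference_disjoint[where d = d and b = b])
      (auto intro: is_solution_antimono simp: is_solution_def)
  then show ?thesis using a_first by (simp add: inf_shunt)
qed

theorem mainTheorem9:
  fixes d :: nat and a b x y :: "nat \<Rightarrow> 'a::boolean_algebra"
  assumes "d \<ge> 1"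
    and "a 0 = top"
    and "\<forall>i. 1 \<le> i \<and> i \<le> d \<longrightarrow> a (Suc i) \<le> a i"
    and "a (Suc d) = bot"
    and "\<forall>i. 1 \<le> i \<and> i \<le> d \<longrightarrow> b (Suc i) \<le> b i"
    and "b (Suc d) = bot"
    and "\<forall>i. 1 \<le> i \<and> i \<le> Suc d \<longrightarrow> a i \<le> b i"
    and "is_solution d a b x"
    and "is_solution d a b y"
  shows "\<forall>i. 1 \<le> i \<and> i \<le> d \<longrightarrow> x i = y i"
proof (intro allI impI)
  fix k assume k: "1 \<le> k \<and> k \<le> d"
  have a_anti: "antimono_on {1..Suc d} a"
    using assms(3) by (intro antimono_on_interval_if_Suc_le) auto
  have "x k \<le> y k"
    by (rule solution_le_solution[OF assms(8,9,2) a_anti assms(4,6)]) (use k in auto)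
  moreover have "y k \<le> x k"
    by (rule solution_le_solution[OF assms(9,8,2) a_anti assms(4,6)]) (use k in auto)
  ultimately show "x k = y k" by (rule order.antisym)
qed

end
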